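(* Let $G$, $H$, $K$ be impartial games. Then $(G\circ H)\circ K = G\circ (H+K)$, where $=$ denotes equality of games (equivalently, $(G\circ H)\circ K + G\circ(H+K)$ is a $\mathcal{P}$-position).
   Context: All games are finite (short) impartial games under normal play. A game is identified with its set of options; $\mathbf{E}$ denotes the game with no options, and $\equiv$ denotes identity of games (same set of options, recursively). The disjunctive sum is the game $G+H \equiv \{g+H,\ G+h\}$ ($g$ ranging over options of $G$, $h$ over options of $H$), so $\mathbf{E}+\mathbf{E}\equiv\mathbf{E}$. A $\mathcal{P}$-position is a game all of whose options are $\mathcal{N}$-positions; an $\mathcal{N}$-position has some option that is a $\mathcal{P}$-position. Two games are equal, $G=H$, if $G+X$ and $H+X$ have the same outcome ($\mathcal{P}$ or $\mathcal{N}$) for every game $X$; for impartial games this holds iff $G+H$ is a $\mathcal{P}$-position. The split sum is defined recursively by: $G\circ H \equiv \mathbf{E}$ if $G\equiv \mathbf{E}$; $G\circ H\equiv G$ if $H\equiv\mathbf{E}$ (and $G\not\equiv\mathbf{E}$); otherwise $G\circ H \equiv \{G\circ h,\ g\circ H\}$. *)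

theory Defs
  imports Main "HOL-Library.FSet"
begin

text \<open>Finite (short) impartial games: a game is identified with its finite set of
  options (recursively).  Identity of games is HOL equality.\<close>
datatype game = Game (opts: "game fset")

definition E :: game where "E = Game {||}"

lemma size_opts_less: "g |\<in>| opts G \<Longrightarrow> size g < size G"
proof (cases G)
  case (Game S)
  assume g: "g |\<in>| opts G"
  then have "g \<in> fset S" using Game by simp
  then have "Suc (size g) \<le> (\<Sum>x\<in>fset S. Suc (size x))"
    by (intro member_le_sum) auto
  then show ?thesis using Game by simp
qed

function gsum :: "game \<Rightarrow> game \<Rightarrow> game" (infixl "\<oplus>" 65) where
  "gsum G H = Game ((\<lambda>g. gsum g H) |`| opts G |\<union>| (\<lambda>h. gsum G h) |`| opts H)"
  by auto
termination by (relation "measure (\<lambda>(G,H). size G + size H)") (auto dest: size_opts_less)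

function split_sum :: "game \<Rightarrow> game \<Rightarrow> game" (infixl "\<circ>\<^sub>s" 65) where
  "split_sum G H =
     (if G = E then E
      else if H = E then G
      else Game ((\<lambda>h. split_sum G h) |`| opts H |\<union>| (\<lambda>g. split_sum g H) |`| opts G))"
  by auto
termination by (relation "measure (\<lambda>(G,H). size G + size H)") (auto dest: size_opts_less)

function isP :: "game \<Rightarrow> bool" where
  "isP G = (\<forall>g. g |\<in>| opts G \<longrightarrow> \<not> isP g)"
  by auto
termination by (relation "measure size") (auto dest: size_opts_less)

text \<open>Equality of games: same outcome in every disjunctive-sum context.
  Outcomes are \<P> or \<N>, so having the same outcome means being \<P> simultaneously.\<close>
definition game_eq :: "game \<Rightarrow> game \<Rightarrow> bool" where
  "game_eq G H \<longleftrightarrow> (\<forall>X. isP (G \<oplus> X) \<longleftrightarrow> isP (H \<oplus> X))"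

end

theory Submission
  imports Defs
begin

text \<open>The two sides are in fact identical games. Away from the degenerate cases involving
  \<open>E\<close>, both unfold into the same three families of options: a move in \<open>K\<close>, a move in
  \<open>H\<close>, and a move in \<open>G\<close>. By induction on the total size, corresponding options
  coincide.\<close>

declare split_sum.simps[simp del] gsum.simps[simp del]

lemma eq_E_iff_opts_empty: "G = E \<longleftrightarrow> opts G = {||}"
  by (cases G) (simp add: E_def)

lemma gsum_unfold: "G \<oplus> H = Game ((\<lambda>g. g \<oplus> H) |`| opts G |\<union>| (\<lambda>h. G \<oplus> h) |`| opts H)"
  by (rule gsum.simps)

lemma split_sum_E_left [simp]: "E \<circ>\<^sub>s K = E"
  by (subst split_sum.simps) simp

lemma split_sum_E_right [simp]: "G \<noteq> E \<Longrightarrow> G \<circ>\<^sub>s E = G"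
  by (subst split_sum.simps) simp

lemma split_sum_unfold: "G \<noteq> E \<Longrightarrow> H \<noteq> E \<Longrightarrow>
  G \<circ>\<^sub>s H = Game ((\<lambda>h. G \<circ>\<^sub>s h) |`| opts H |\<union>| (\<lambda>g. g \<circ>\<^sub>s H) |`| opts G)"
  by (subst split_sum.simps) simp

lemma gsum_E_left [simp]: "E \<oplus> K = K"
proof (induction K rule: measure_induct_rule[where f = size])
  case (less K)
  have "E \<oplus> K = Game ((\<lambda>k. E \<oplus> k) |`| opts K)"
    by (subst gsum_unfold) (simp add: E_def)
  also have "(\<lambda>k. E \<oplus> k) |`| opts K = opts K"
    using less size_opts_less by (simp add: fset.map_ident_strong)
  finally show ?case by (cases K) simp
qed

lemma gsum_E_right [simp]: "H \<oplus> E = H"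
proof (induction H rule: measure_induct_rule[where f = size])
  case (less H)
  have "H \<oplus> E = Game ((\<lambda>h. h \<oplus> E) |`| opts H)"
    by (subst gsum_unfold) (simp add: E_def)
  also have "(\<lambda>h. h \<oplus> E) |`| opts H = opts H"
    using less size_opts_less by (simp add: fset.map_ident_strong)
  finally show ?case by (cases H) simp
qed

lemma gsum_neq_E: "H \<noteq> E \<Longrightarrow> H \<oplus> K \<noteq> E"
  by (subst gsum_unfold) (simp add: eq_E_iff_opts_empty)

lemma split_sum_neq_E: "G \<noteq> E \<Longrightarrow> H \<noteq> E \<Longrightarrow> G \<circ>\<^sub>s H \<noteq> E"
  by (subst split_sum_unfold) (simp_all add: eq_E_iff_opts_empty)

lemma split_sum_split_sum: "(G \<circ>\<^sub>s H) \<circ>\<^sub>s K = G \<circ>\<^sub>s (H \<oplus> K)"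
proof (induction "size G + size H + size K" arbitrary: G H K rule: less_induct)
  case less
  consider "G = E" | "G \<noteq> E" "H = E" | "G \<noteq> E" "H \<noteq> E" "K = E"
    | "G \<noteq> E" "H \<noteq> E" "K \<noteq> E"
    by blast
  then show ?case
  proof cases
    case 1
    then show ?thesis by simp
  next
    case 2
    then show ?thesis by simp
  next
    case 3
    then show ?thesis by (simp add: split_sum_neq_E)
  next
    case 4
    then have GH: "G \<circ>\<^sub>s H \<noteq> E" and HK: "H \<oplus> K \<noteq> E"
      by (simp_all add: split_sum_neq_E gsum_neq_E)
    have opts_GH: "opts (G \<circ>\<^sub>s H) = (\<lambda>h. G \<circ>\<^sub>s h) |`| opts H |\<union>| (\<lambda>g. g \<circ>\<^sub>s H) |`| opts G"
      using 4 by (simp add: split_sum_unfold)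
    have opts_HK: "opts (H \<oplus> K) = (\<lambda>h. h \<oplus> K) |`| opts H |\<union>| (\<lambda>k. H \<oplus> k) |`| opts K"
      by (subst gsum_unfold) simp
    have lhs: "(G \<circ>\<^sub>s H) \<circ>\<^sub>s K = Game ((\<lambda>k. (G \<circ>\<^sub>s H) \<circ>\<^sub>s k) |`| opts K |\<union>|
        ((\<lambda>h. (G \<circ>\<^sub>s h) \<circ>\<^sub>s K) |`| opts H |\<union>| (\<lambda>g. (g \<circ>\<^sub>s H) \<circ>\<^sub>s K) |`| opts G))"
      by (subst split_sum_unfold[OF GH \<open>K \<noteq> E\<close>])
        (simp only: opts_GH fimage_funion fset.map_comp comp_def)
    have rhs: "G \<circ>\<^sub>s (H \<oplus> K) = Game ((\<lambda>k. G \<circ>\<^sub>s (H \<oplus> k)) |`| opts K |\<union>|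
        ((\<lambda>h. G \<circ>\<^sub>s (h \<oplus> K)) |`| opts H |\<union>| (\<lambda>g. g \<circ>\<^sub>s (H \<oplus> K)) |`| opts G))"
      by (subst split_sum_unfold[OF \<open>G \<noteq> E\<close> HK])
        (simp only: opts_HK fimage_funion fset.map_comp comp_def funion_ac)
    have "(\<lambda>k. (G \<circ>\<^sub>s H) \<circ>\<^sub>s k) |`| opts K = (\<lambda>k. G \<circ>\<^sub>s (H \<oplus> k)) |`| opts K"
      and "(\<lambda>h. (G \<circ>\<^sub>s h) \<circ>\<^sub>s K) |`| opts H = (\<lambda>h. G \<circ>\<^sub>s (h \<oplus> K)) |`| opts H"
      and "(\<lambda>g. (g \<circ>\<^sub>s H) \<circ>\<^sub>s K) |`| opts G = (\<lambda>g. g \<circ>\<^sub>s (H \<oplus> K)) |`| opts G"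
      by (rule fset.map_cong0, rule less, use size_opts_less in fastforce)+
    then show ?thesis
      by (simp only: lhs rhs)
  qed
qed

lemma game_eq_refl: "game_eq G G"
  unfolding game_eq_def by blast

theorem theorem2p4:
  fixes G H K :: game
  shows "game_eq ((G \<circ>\<^sub>s H) \<circ>\<^sub>s K) (G \<circ>\<^sub>s (H \<oplus> K))"
  unfolding split_sum_split_sum by (rule game_eq_refl)

end
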